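(* Let $K$ be the fractal percolation on $[0,1]$ with parameters $M\in\mathbb{N}_{\geq2}$ and $p\in[0,1]$, with construction steps $K_n$. Then for any $n\in\mathbb{N}_0$, $$\mathbb{E}V_1(K_n)=p^n,\qquad \mathbb{E}V_0(K_n)=(Mp)^n\left(1-\frac{(M-1)p}{M-p}\left[1-\left(\frac pM\right)^n\right]\right).$$
   Context: Fractal percolation on $[0,1]$: $K_0=[0,1]$; given $K_{n-1}$, a union of closed intervals $[iM^{-(n-1)},(i+1)M^{-(n-1)}]$, each such interval is divided into $M$ closed subintervals of length $M^{-n}$, each kept independently (of everything else) with probability $p$; $K_n$ is the union of kept subintervals. $V_1$ is length and $V_0$ the Euler characteristic (number of connected components) of a finite union of compact intervals. *)

theory Defs
  imports "HOL-Probability.Probability"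
begin

text \<open>The randomness is a family of independent
Bernoulli(p) coins indexed by pairs (k, i): the coin omega (k, i) decides whether the
i-th M-adic interval of level k (k >= 1, i < M^k) is kept. Coordinates outside this
range are unused.\<close>

definition fp_space :: "real \<Rightarrow> (nat \<times> nat \<Rightarrow> bool) measure" where
  "fp_space p = PiM UNIV (\<lambda>_. measure_pmf (bernoulli_pmf p))"

text \<open>The level-n interval i survives to K_n iff it and all its ancestors were kept.\<close>
definition fp_survives :: "nat \<Rightarrow> (nat \<times> nat \<Rightarrow> bool) \<Rightarrow> nat \<Rightarrow> nat \<Rightarrow> bool" where
  "fp_survives M \<omega> n i = (\<forall>k\<in>{1..n}. \<omega> (k, i div M ^ (n - k)))"

definition fp_K :: "nat \<Rightarrow> (nat \<times> nat \<Rightarrow> bool) \<Rightarrow> nat \<Rightarrow> real set" where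
  "fp_K M \<omega> n = (\<Union>i\<in>{i. i < M ^ n \<and> fp_survives M \<omega> n i}.
        {real i / real M ^ n .. (real i + 1) / real M ^ n})"

definition V1 :: "real set \<Rightarrow> real" where
  "V1 S = measure lborel S"

definition V0 :: "real set \<Rightarrow> real" where
  "V0 S = real (card (components S))"

end

theory Submission
  imports Defs
begin

text \<open>\<open>K\<^sub>n\<close> is the union of the surviving level \<open>n\<close> intervals. Hence \<open>V\<^sub>1(K\<^sub>n)\<close> is their
  number divided by \<open>M\<^sup>n\<close>, and \<open>V\<^sub>0(K\<^sub>n)\<close>, counting each component by its leftmost interval,
  is their number minus the number of surviving adjacent pairs \<open>(i - 1, i)\<close>. An interval
  survives iff the coins of its \<open>n\<close> ancestors are all kept, which has probability \<open>p\<^sup>n\<close>; an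
  adjacent pair survives with probability \<open>p\<^sup>n\<^sup>+\<^sup>s\<close>, where \<open>s\<close> is the number of levels at which
  the two ancestor chains differ. Summing \<open>p\<^sup>s\<close> over \<open>i\<close> via the decomposition
  \<open>i = q M + r\<close> gives a linear recursion in \<open>n\<close>, whose solution is the stated formula.\<close>

definition grid_interval :: "real \<Rightarrow> nat \<Rightarrow> real set" where
  "grid_interval c i = {real i / c .. (real i + 1) / c}"

lemma mem_grid_interval:
  assumes "c > 0"
  shows "x \<in> grid_interval c i \<longleftrightarrow> real i \<le> x * c \<and> x * c \<le> real i + 1"
  using assms by (simp add: grid_interval_def pos_divide_le_eq pos_le_divide_eq)

lemma left_end_in_grid_interval: "c > 0 \<Longrightarrow> real i / c \<in> grid_interval c i"
  by (simp add: mem_grid_interval)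

lemma measure_grid_interval: "c > 0 \<Longrightarrow> measure lborel (grid_interval c i) = 1 / c"
  by (simp add: grid_interval_def divide_right_mono add_divide_distrib)

lemma grid_intervals_overlap_negligible:
  assumes "c > 0" "i \<noteq> j"
  shows "negligible (grid_interval c i \<inter> grid_interval c j)"
proof -
  have "grid_interval c i \<inter> grid_interval c j \<subseteq> {real (max i j) / c}"
    using assms by (auto simp: mem_grid_interval max_def eq_divide_eq)
  then show ?thesis
    using negligible_subset negligible_sing by blast
qed

lemma measure_Union_grid_intervals:
  assumes "c > 0" "finite U"
  shows "measure lborel (\<Union>i\<in>U. grid_interval c i) = real (card U) / c"
proof -
  have "measure lborel (\<Union>i\<in>U. grid_interval c i) = measure lebesgue (\<Union>i\<in>U. grid_interval c i)"
    using assms(2) by (simp add: grid_interval_def)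
  also have "\<dots> = (\<Sum>i\<in>U. measure lebesgue (grid_interval c i))"
    using assms by (intro measure_negligible_finite_Union_image pairwiseI grid_intervals_overlap_negligible)
      (auto simp: grid_interval_def)
  also have "\<dots> = (\<Sum>i\<in>U. 1 / c)"
    using assms(1) measure_grid_interval by (intro sum.cong) (auto simp: grid_interval_def)
  finally show ?thesis
    by simp
qed

lemma not_in_Union_grid_intervals_gap:
  assumes "c > 0" "j \<ge> 1" "j - 1 \<notin> U" "real j - 1 < y * c" "y * c < real j"
  shows "y \<notin> (\<Union>i\<in>U. grid_interval c i)"
proof
  assume "y \<in> (\<Union>i\<in>U. grid_interval c i)"
  then obtain i where "i \<in> U" "real i \<le> y * c" "y * c \<le> real i + 1"
    using assms(1) by (auto simp: mem_grid_interval)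
  moreover from \<open>i \<in> U\<close> assms(3) have "i \<noteq> j - 1"
    by blast
  ultimately show False
    using assms(2,4,5) by (cases "i < j - 1") (auto simp: of_nat_diff)
qed

lemma exists_left_end_of_run:
  fixes k :: nat
  assumes "k \<in> U"
  shows "\<exists>i. i \<in> U \<and> (i = 0 \<or> i - 1 \<notin> U) \<and> i \<le> k \<and> {i..k} \<subseteq> U"
  using assms
proof (induction k)
  case 0
  then show ?case by auto
next
  case (Suc k)
  show ?case
  proof (cases "k \<in> U")
    case True
    with Suc.IH obtain i where "i \<in> U" "i = 0 \<or> i - 1 \<notin> U" "i \<le> k" "{i..k} \<subseteq> U"
      by blast
    with Suc.prems show ?thesis
      by (intro exI[of _ i]) (auto simp: le_Suc_eq)
  next
    case False
    with Suc.prems show ?thesis by auto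
  qed
qed

lemma grid_run_subset_Union:
  assumes "c > 0" "i \<le> k" "{i..k} \<subseteq> U"
  shows "{real i / c .. (real k + 1) / c} \<subseteq> (\<Union>j\<in>U. grid_interval c j)"
proof
  fix y assume "y \<in> {real i / c .. (real k + 1) / c}"
  then have y: "real i \<le> y * c" "y * c \<le> real k + 1"
    using assms(1) by (auto simp: pos_divide_le_eq pos_le_divide_eq)
  define j where "j = min k (nat \<lfloor>y * c\<rfloor>)"
  have "real j \<le> y * c" "y * c \<le> real j + 1" "i \<le> j" "j \<le> k"
    using y assms(2) by (auto simp: j_def min_def le_nat_iff le_floor_iff nat_le_iff floor_le_iff)
  with assms have "j \<in> U" "y \<in> grid_interval c j"
    by (auto simp: mem_grid_interval)
  then show "y \<in> (\<Union>j\<in>U. grid_interval c j)"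
    by blast
qed

lemma card_components_Union_grid_intervals:
  assumes c: "c > 0"
  shows "card (components (\<Union>i\<in>U. grid_interval c i)) = card {i\<in>U. i = 0 \<or> i - 1 \<notin> U}"
proof -
  define S where "S = (\<Union>i\<in>U. grid_interval c i)"
  define L where "L = {i\<in>U. i = 0 \<or> i - 1 \<notin> U}"
  define g where "g i = connected_component_set S (real i / c)" for i
  have left_end_in_S: "real i / c \<in> S" if "i \<in> U" for i
    using that left_end_in_grid_interval[OF c] by (auto simp: S_def)
  have "g i \<noteq> g j" if "i \<in> L" "j \<in> L" "i < j" for i j
  proof
    assume "g i = g j"
    then have "real j / c \<in> g i"
      using \<open>j \<in> L\<close> left_end_in_S by (simp add: g_def L_def)
    moreover have "real i / c \<in> g i"
      using \<open>i \<in> L\<close> left_end_in_S by (simp add: g_def L_def)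
    moreover have "is_interval (g i)"
      by (simp add: g_def is_interval_connected_1)
    moreover have "real i / c \<le> (real j - 1 / 2) / c" "(real j - 1 / 2) / c \<le> real j / c"
      using \<open>i < j\<close> c by (simp_all add: divide_right_mono)
    ultimately have "(real j - 1 / 2) / c \<in> S"
      using connected_component_subset unfolding g_def is_interval_1 by blast
    moreover have "j \<ge> 1" "j - 1 \<notin> U"
      using that by (auto simp: L_def)
    ultimately show False
      using not_in_Union_grid_intervals_gap[OF c] c unfolding S_def by fastforce
  qed
  then have "inj_on g L"
    by (metis inj_onI linorder_neqE_nat)
  moreover have "g ` L = components S"
  proof
    show "g ` L \<subseteq> components S"
      using left_end_in_S by (auto simp: components_def g_def L_def)
  next
    show "components S \<subseteq> g ` L"
    proof
      fix C assume "C \<in> components S"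
      then obtain x where x: "x \<in> S" "C = connected_component_set S x"
        by (auto simp: components_def)
      then obtain k where "k \<in> U" "x \<in> grid_interval c k"
        by (auto simp: S_def)
      then obtain i where "i \<in> L" "i \<le> k" "{i..k} \<subseteq> U"
        using exists_left_end_of_run unfolding L_def by blast
      define T where "T = {real i / c .. (real k + 1) / c}"
      have "real i / c \<le> real k / c"
        using \<open>i \<le> k\<close> c by (simp add: divide_right_mono)
      then have "x \<in> T" "real i / c \<in> T"
        using \<open>x \<in> grid_interval c k\<close> c by (auto simp: T_def grid_interval_def)
      moreover have "T \<subseteq> S"
        unfolding T_def S_def using grid_run_subset_Union[OF c \<open>i \<le> k\<close> \<open>{i..k} \<subseteq> U\<close>] .
      ultimately have "x \<in> g i"
        unfolding g_def by (metis T_def connected_Icc connected_componentI mem_Collect_eq)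
      then have "g i = C"
        unfolding g_def x(2) by (metis connected_component_eq)
      with \<open>i \<in> L\<close> show "C \<in> g ` L"
        by blast
    qed
  qed
  ultimately have "bij_betw g L (components S)"
    by (simp add: bij_betw_def)
  then show ?thesis
    unfolding S_def L_def by (simp add: bij_betw_same_card)
qed

definition fp_ancestors :: "nat \<Rightarrow> nat \<Rightarrow> nat \<Rightarrow> (nat \<times> nat) set" where
  "fp_ancestors M n i = (\<lambda>k. (k, i div M ^ (n - k))) ` {1..n}"

lemma fp_survives_iff_ancestors: "fp_survives M \<omega> n i \<longleftrightarrow> (\<forall>a\<in>fp_ancestors M n i. \<omega> a)"
  by (auto simp: fp_survives_def fp_ancestors_def)

lemma finite_fp_ancestors: "finite (fp_ancestors M n i)"
  by (simp add: fp_ancestors_def)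

lemma card_fp_ancestors: "card (fp_ancestors M n i) = n"
  unfolding fp_ancestors_def by (subst card_image) (auto simp: inj_on_def)

lemma mem_fp_ancestors:
  "(k, a) \<in> fp_ancestors M n i \<longleftrightarrow> k \<in> {1..n} \<and> a = i div M ^ (n - k)"
  by (auto simp: fp_ancestors_def)

lemma div_eq_Suc_div_iff:
  fixes d j :: nat
  assumes "0 < d"
  shows "j div d = Suc j div d \<longleftrightarrow> \<not> d dvd Suc j"
  using assms by (auto simp: div_Suc dvd_eq_mod_eq_0)

text \<open>For \<open>0 < i\<close>, the level \<open>k\<close> ancestors of the level \<open>n\<close> intervals \<open>i - 1\<close> and \<open>i\<close>
  differ exactly for the levels in \<open>separating_levels M n i\<close>.\<close>

definition separating_levels :: "nat \<Rightarrow> nat \<Rightarrow> nat \<Rightarrow> nat set" where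
  "separating_levels M n i = {k \<in> {1..n}. M ^ (n - k) dvd i}"

lemma card_fp_ancestors_Un_pred:
  assumes "0 < M" "0 < i"
  shows "card (fp_ancestors M n i \<union> fp_ancestors M n (i - 1)) = n + card (separating_levels M n i)"
proof -
  obtain j where i: "i = Suc j"
    using assms(2) gr0_implies_Suc by blast
  define parent where "parent k = (k, j div M ^ (n - k))" for k
  have "fp_ancestors M n j - fp_ancestors M n (Suc j)
      = parent ` {k \<in> {1..n}. j div M ^ (n - k) \<noteq> Suc j div M ^ (n - k)}"
    by (auto simp: parent_def mem_fp_ancestors)
  also have "{k \<in> {1..n}. j div M ^ (n - k) \<noteq> Suc j div M ^ (n - k)} = separating_levels M n (Suc j)"
    using assms(1) by (simp add: separating_levels_def div_eq_Suc_div_iff)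
  finally have "card (fp_ancestors M n j - fp_ancestors M n (Suc j)) = card (separating_levels M n i)"
    unfolding i by (simp add: card_image inj_on_def parent_def)
  moreover have "card (fp_ancestors M n i \<union> fp_ancestors M n (i - 1))
      = card (fp_ancestors M n (Suc j)) + card (fp_ancestors M n j - fp_ancestors M n (Suc j))"
    unfolding i by (simp add: card_Un_disjoint[symmetric] finite_fp_ancestors Un_Diff_cancel)
  ultimately show ?thesis
    by (simp add: card_fp_ancestors)
qed

lemma separating_levels_Suc:
  assumes "0 < M" "r < M"
  shows "separating_levels M (Suc n) (q * M + r)
    = insert (Suc n) (if r = 0 then separating_levels M n q else {})"
proof -
  have M_dvd: "M dvd q * M + r \<longleftrightarrow> r = 0"
    using assms by (auto simp: dvd_add_right_iff dest: dvd_imp_le)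
  have "M * M ^ (n - k) dvd q * M + r \<longleftrightarrow> r = 0 \<and> M ^ (n - k) dvd q" for k
  proof
    assume h: "M * M ^ (n - k) dvd q * M + r"
    then have "r = 0"
      using M_dvd dvd_mult_left by blast
    with h show "r = 0 \<and> M ^ (n - k) dvd q"
      using assms(1) by (simp add: mult.commute[of q])
  qed (simp add: mult.commute[of q])
  then have "k \<le> n \<Longrightarrow> M ^ (Suc n - k) dvd q * M + r \<longleftrightarrow> r = 0 \<and> M ^ (n - k) dvd q" for k
    by (simp add: Suc_diff_le)
  then show ?thesis
    unfolding separating_levels_def by (auto simp: le_Suc_eq)
qed

lemma separating_levels_0: "separating_levels M n 0 = {1..n}"
  by (auto simp: separating_levels_def)

lemma sum_lessThan_mult_split:
  fixes f :: "nat \<Rightarrow> 'a::comm_monoid_add"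
  shows "(\<Sum>i<a * b. f i) = (\<Sum>q<a. \<Sum>r<b. f (q * b + r))"
proof (induction a)
  case (Suc a)
  have "(\<Sum>i<a * b + d. f i) = (\<Sum>i<a * b. f i) + (\<Sum>r<d. f (a * b + r))" for d
    by (induction d) (simp_all add: add.assoc)
  with Suc.IH show ?case
    by (simp add: add.commute)
qed simp

lemma sum_power_card_separating_levels_Suc:
  fixes x :: real
  assumes "0 < M"
  shows "(\<Sum>i<M ^ Suc n. x ^ card (separating_levels M (Suc n) i))
    = x * (\<Sum>q<M ^ n. x ^ card (separating_levels M n q)) + real (M ^ n) * (real M - 1) * x"
proof -
  have "(\<Sum>r<M. x ^ card (separating_levels M (Suc n) (q * M + r)))
      = x * x ^ card (separating_levels M n q) + (real M - 1) * x" for q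
  proof -
    obtain m where M: "M = Suc m"
      using assms gr0_implies_Suc by blast
    have "(\<Sum>r<M. x ^ card (separating_levels M (Suc n) (q * M + r)))
        = (\<Sum>r<Suc m. x ^ Suc (if r = 0 then card (separating_levels M n q) else 0))"
      using separating_levels_Suc[OF assms] unfolding M
      by (intro sum.cong) (auto simp: separating_levels_def)
    also have "\<dots> = x * x ^ card (separating_levels M n q) + real m * x"
      by (subst sum.lessThan_Suc_shift) simp
    finally show ?thesis
      by (simp add: M)
  qed
  then show ?thesis
    by (simp add: sum_lessThan_mult_split power_Suc2 sum.distrib sum_distrib_left del: power_Suc)
qed

lemma sum_power_card_separating_levels_lessThan:
  fixes x :: real
  assumes "0 < M"
  shows "(\<Sum>i<M ^ n. x ^ card (separating_levels M n i)) * (real M - x)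
    = x ^ n * (real M - x) + (real M - 1) * x * (real M ^ n - x ^ n)"
proof (induction n)
  case 0
  then show ?case
    by (simp add: separating_levels_def)
next
  case (Suc n)
  let ?S = "\<lambda>n. \<Sum>i<M ^ n. x ^ card (separating_levels M n i)"
  have "?S (Suc n) * (real M - x) = x * (?S n * (real M - x)) + real M ^ n * (real M - 1) * x * (real M - x)"
    unfolding sum_power_card_separating_levels_Suc[OF assms] by (simp add: algebra_simps)
  also have "\<dots> = x ^ Suc n * (real M - x) + (real M - 1) * x * (real M ^ Suc n - x ^ Suc n)"
    unfolding Suc.IH by (simp add: algebra_simps)
  finally show ?case .
qed

lemma sum_power_card_separating_levels:
  fixes x :: real
  assumes "0 < M"
  shows "(\<Sum>i\<in>{1..<M ^ n}. x ^ card (separating_levels M n i)) * (real M - x)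
    = (real M - 1) * x * (real M ^ n - x ^ n)"
proof -
  have "(\<Sum>i<M ^ n. x ^ card (separating_levels M n i))
      = x ^ n + (\<Sum>i\<in>{1..<M ^ n}. x ^ card (separating_levels M n i))"
    using assms by (simp add: lessThan_atLeast0 sum.atLeast_Suc_lessThan separating_levels_0)
  then show ?thesis
    using sum_power_card_separating_levels_lessThan[OF assms, where n=n and x=x] by (simp add: algebra_simps)
qed

lemma prob_space_fp_space: "prob_space (fp_space p)"
  unfolding fp_space_def by (rule prob_space_PiM) (simp add: prob_space_measure_pmf)

lemma all_kept_eq_prod_emb:
  "{\<omega>. \<forall>a\<in>A. \<omega> a}
    = prod_emb UNIV (\<lambda>_. measure_pmf (bernoulli_pmf p)) A (\<Pi>\<^sub>E a\<in>A. {True})"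
proof (rule set_eqI)
  fix \<omega>
  have "\<omega> \<in> prod_emb UNIV (\<lambda>_. measure_pmf (bernoulli_pmf p)) A (\<Pi>\<^sub>E a\<in>A. {True})
      \<longleftrightarrow> restrict \<omega> A \<in> (\<Pi>\<^sub>E a\<in>A. {True})"
    by (simp add: prod_emb_def space_PiM)
  then show "\<omega> \<in> {\<omega>. \<forall>a\<in>A. \<omega> a}
      \<longleftrightarrow> \<omega> \<in> prod_emb UNIV (\<lambda>_. measure_pmf (bernoulli_pmf p)) A (\<Pi>\<^sub>E a\<in>A. {True})"
    by (simp only: restrict_PiE_iff) simp
qed

lemma sets_fp_space_all_kept:
  "finite A \<Longrightarrow> {\<omega>. \<forall>a\<in>A. \<omega> a} \<in> sets (fp_space p)"
  unfolding all_kept_eq_prod_emb[of A p] fp_space_def by (rule sets_PiM_I) auto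

lemma prob_fp_space_all_kept:
  assumes "finite A" "0 \<le> p" "p \<le> 1"
  shows "measure (fp_space p) {\<omega>. \<forall>a\<in>A. \<omega> a} = p ^ card A"
proof -
  have "emeasure (fp_space p) {\<omega>. \<forall>a\<in>A. \<omega> a}
      = (\<Prod>a\<in>A. emeasure (measure_pmf (bernoulli_pmf p)) {True})"
    unfolding all_kept_eq_prod_emb[of A p] fp_space_def
    by (rule emeasure_PiM_emb) (auto simp: assms(1) prob_space_measure_pmf)
  also have "\<dots> = ennreal (p ^ card A)"
    using assms(2,3) by (simp add: emeasure_pmf_single prod_ennreal ennreal_power)
  finally show ?thesis
    using assms(2) by (simp add: measure_def)
qed

lemma (in prob_space) expectation_card_events:
  assumes "finite I" "\<And>i. i \<in> I \<Longrightarrow> A i \<in> events"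
  shows "integrable M (\<lambda>\<omega>. real (card {i\<in>I. \<omega> \<in> A i}))"
    and "(\<integral>\<omega>. real (card {i\<in>I. \<omega> \<in> A i}) \<partial>M) = (\<Sum>i\<in>I. prob (A i))"
proof -
  have card_eq: "real (card {i\<in>I. \<omega> \<in> A i}) = (\<Sum>i\<in>I. indicator (A i) \<omega>)" for \<omega>
    using assms(1) by (simp add: indicator_def sum.If_cases Int_def)
  have "integrable M (indicator (A i) :: 'a \<Rightarrow> real)" if "i \<in> I" for i
    using assms(2)[OF that] by (simp add: integrable_indicator_iff emeasure_finite less_top[symmetric])
  then show "integrable M (\<lambda>\<omega>. real (card {i\<in>I. \<omega> \<in> A i}))"
    and "(\<integral>\<omega>. real (card {i\<in>I. \<omega> \<in> A i}) \<partial>M) = (\<Sum>i\<in>I. prob (A i))"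
    unfolding card_eq using assms(2) by (auto simp: integral_sum)
qed

definition fp_survivors :: "nat \<Rightarrow> (nat \<times> nat \<Rightarrow> bool) \<Rightarrow> nat \<Rightarrow> nat set" where
  "fp_survivors M \<omega> n = {i. i < M ^ n \<and> fp_survives M \<omega> n i}"

definition fp_adjacent_survivors :: "nat \<Rightarrow> (nat \<times> nat \<Rightarrow> bool) \<Rightarrow> nat \<Rightarrow> nat set" where
  "fp_adjacent_survivors M \<omega> n =
    {i \<in> {1..<M ^ n}. fp_survives M \<omega> n (i - 1) \<and> fp_survives M \<omega> n i}"

lemma fp_K_eq_Union_grid_intervals:
  "fp_K M \<omega> n = (\<Union>i\<in>fp_survivors M \<omega> n. grid_interval (real M ^ n) i)"
  by (simp add: fp_K_def fp_survivors_def grid_interval_def)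

lemma V1_fp_K:
  "0 < M \<Longrightarrow> V1 (fp_K M \<omega> n) = real (card (fp_survivors M \<omega> n)) / real M ^ n"
  unfolding V1_def fp_K_eq_Union_grid_intervals
  by (rule measure_Union_grid_intervals) (auto simp: fp_survivors_def)

lemma V0_fp_K:
  assumes "0 < M"
  shows "V0 (fp_K M \<omega> n)
    = real (card (fp_survivors M \<omega> n)) - real (card (fp_adjacent_survivors M \<omega> n))"
proof -
  let ?U = "fp_survivors M \<omega> n"
  let ?L = "{i \<in> ?U. i = 0 \<or> i - 1 \<notin> ?U}"
  have "?U = ?L \<union> fp_adjacent_survivors M \<omega> n" "?L \<inter> fp_adjacent_survivors M \<omega> n = {}"
    by (auto simp: fp_survivors_def fp_adjacent_survivors_def)
  moreover have "finite ?U"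
    by (simp add: fp_survivors_def)
  ultimately have "card ?U = card ?L + card (fp_adjacent_survivors M \<omega> n)"
    by (metis card_Un_disjoint finite_Un)
  then show ?thesis
    using assms by (simp add: V0_def fp_K_eq_Union_grid_intervals card_components_Union_grid_intervals)
qed

lemma expectation_card_fp_survivors:
  assumes "0 \<le> p" "p \<le> 1"
  shows "integrable (fp_space p) (\<lambda>\<omega>. real (card (fp_survivors M \<omega> n)))"
    and "(\<integral>\<omega>. real (card (fp_survivors M \<omega> n)) \<partial>fp_space p) = real M ^ n * p ^ n"
proof -
  let ?E = "\<lambda>i. {\<omega>. \<forall>a\<in>fp_ancestors M n i. \<omega> a}"
  have "fp_survivors M \<omega> n = {i \<in> {..<M ^ n}. \<omega> \<in> ?E i}" for \<omega>
    by (auto simp: fp_survivors_def fp_survives_iff_ancestors)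
  moreover have "?E i \<in> sets (fp_space p)" "measure (fp_space p) (?E i) = p ^ n" for i
    using sets_fp_space_all_kept prob_fp_space_all_kept[OF _ assms]
    by (simp_all add: finite_fp_ancestors card_fp_ancestors)
  ultimately show "integrable (fp_space p) (\<lambda>\<omega>. real (card (fp_survivors M \<omega> n)))"
    and "(\<integral>\<omega>. real (card (fp_survivors M \<omega> n)) \<partial>fp_space p) = real M ^ n * p ^ n"
    using prob_space.expectation_card_events[OF prob_space_fp_space, of "{..<M ^ n}" ?E p]
    by simp_all
qed

lemma expectation_card_fp_adjacent_survivors:
  assumes "0 < M" "0 \<le> p" "p \<le> 1"
  shows "integrable (fp_space p) (\<lambda>\<omega>. real (card (fp_adjacent_survivors M \<omega> n)))"
    and "(\<integral>\<omega>. real (card (fp_adjacent_survivors M \<omega> n)) \<partial>fp_space p)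
      = p ^ n * (\<Sum>i\<in>{1..<M ^ n}. p ^ card (separating_levels M n i))"
proof -
  let ?E = "\<lambda>i. {\<omega>. \<forall>a\<in>fp_ancestors M n i \<union> fp_ancestors M n (i - 1). \<omega> a}"
  have "fp_adjacent_survivors M \<omega> n = {i \<in> {1..<M ^ n}. \<omega> \<in> ?E i}" for \<omega>
    by (auto simp: fp_adjacent_survivors_def fp_survives_iff_ancestors)
  moreover have "?E i \<in> sets (fp_space p)" for i
    by (simp add: sets_fp_space_all_kept finite_fp_ancestors)
  moreover have "measure (fp_space p) (?E i) = p ^ n * p ^ card (separating_levels M n i)"
    if "i \<in> {1..<M ^ n}" for i
    using that prob_fp_space_all_kept[OF _ assms(2,3)] card_fp_ancestors_Un_pred[OF assms(1)]
    by (simp add: finite_fp_ancestors power_add)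
  ultimately show "integrable (fp_space p) (\<lambda>\<omega>. real (card (fp_adjacent_survivors M \<omega> n)))"
    and "(\<integral>\<omega>. real (card (fp_adjacent_survivors M \<omega> n)) \<partial>fp_space p)
      = p ^ n * (\<Sum>i\<in>{1..<M ^ n}. p ^ card (separating_levels M n i))"
    using prob_space.expectation_card_events[OF prob_space_fp_space, of "{1..<M ^ n}" ?E p]
    by (simp_all add: sum_distrib_left)
qed

theorem proposition4p2:
  fixes M n :: nat and p :: real
  assumes "M \<ge> 2" and "0 \<le> p" and "p \<le> 1"
  shows "(\<integral>\<omega>. V1 (fp_K M \<omega> n) \<partial>fp_space p) = p ^ n
    \<and> (\<integral>\<omega>. V0 (fp_K M \<omega> n) \<partial>fp_space p)
        = (real M * p) ^ n * (1 - (real M - 1) * p / (real M - p) * (1 - (p / real M) ^ n))"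
proof
  have M: "0 < M" and "real M - p \<noteq> 0"
    using assms by auto
  show "(\<integral>\<omega>. V1 (fp_K M \<omega> n) \<partial>fp_space p) = p ^ n"
    using M expectation_card_fp_survivors(2)[OF assms(2,3)] by (simp add: V1_fp_K)
  define S where "S = (\<Sum>i\<in>{1..<M ^ n}. p ^ card (separating_levels M n i))"
  have S: "S = (real M - 1) * p * (real M ^ n - p ^ n) / (real M - p)"
    using sum_power_card_separating_levels[OF M, where n=n and x=p] \<open>real M - p \<noteq> 0\<close>
    by (simp add: S_def eq_divide_eq)
  have "(\<integral>\<omega>. V0 (fp_K M \<omega> n) \<partial>fp_space p) = real M ^ n * p ^ n - p ^ n * S"
    using expectation_card_fp_survivors[OF assms(2,3)]
      expectation_card_fp_adjacent_survivors[OF M assms(2,3)]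
    by (simp add: V0_fp_K[OF M] S_def)
  also have "\<dots> = (real M * p) ^ n * (1 - (real M - 1) * p / (real M - p) * (1 - (p / real M) ^ n))"
    unfolding S using M \<open>real M - p \<noteq> 0\<close> by (simp add: field_simps power_mult_distrib power_divide)
  finally show "(\<integral>\<omega>. V0 (fp_K M \<omega> n) \<partial>fp_space p)
      = (real M * p) ^ n * (1 - (real M - 1) * p / (real M - p) * (1 - (p / real M) ^ n))" .
qed

end
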